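(* Every Boolean metric space $X$ over a Boolean ring $B$ is isometric to a metrizable subset of a $B$-module equipped with its modular metric. Furthermore, for any fixed $x_{0}\in X$ there exist a $B$-module $M$, a metrizable subset $S\subseteq M$ with $0\in S$, and an isometry $g:X\to S$ (for the modular metric on $S$) with $g(x_{0})=0$.
   Context: $B$ is a Boolean ring ($a\vee b=a+b+ab$, $a\le b\iff ab=a$, $\bar a=1+a$); $B$ is a regular ring whose idempotents are all its elements. A Boolean metric space over $B$: set $X$ with $d:X\times X\to B$, $d(x,y)=0\iff x=y$, symmetric, $d(x,z)\le d(x,y)\vee d(y,z)$. An isometry is a bijection $f$ with $d(f(x),f(y))=d(x,y)$. For a regular ring $A$ and an $A$-module $M$, a subset $S\subseteq M$ is metrizable if for all $x,y\in S$ the annihilator ideal $\mathrm{Ann}(x-y)=\{a\in A: a(x-y)=0\}$ is principal; it then has a unique idempotent generator $a_{xy}$, and the modular metric on $S$ is $d(x,y)=1-a_{xy}$ (the complement of $a_{xy}$ in the Boolean ring of idempotents of $A$). *)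

theory Defs
  imports Main HOL.Modules "HOL-Library.Function_Algebras"
begin

definition boolean_ring :: "'b::comm_ring_1 itself \<Rightarrow> bool" where
  "boolean_ring _ \<longleftrightarrow> (\<forall>a::'b. a * a = a)"

definition bjoin :: "'b::comm_ring_1 \<Rightarrow> 'b \<Rightarrow> 'b" where
  "bjoin a b = a + b + a * b"

definition ble :: "'b::comm_ring_1 \<Rightarrow> 'b \<Rightarrow> bool" where
  "ble a b \<longleftrightarrow> a * b = a"

definition boolean_metric :: "'x set \<Rightarrow> ('x \<Rightarrow> 'x \<Rightarrow> 'b::comm_ring_1) \<Rightarrow> bool" where
  "boolean_metric X d \<longleftrightarrow>
     (\<forall>x\<in>X. \<forall>y\<in>X. (d x y = 0 \<longleftrightarrow> x = y)) \<and>
     (\<forall>x\<in>X. \<forall>y\<in>X. d x y = d y x) \<and>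
     (\<forall>x\<in>X. \<forall>y\<in>X. \<forall>z\<in>X. ble (d x z) (bjoin (d x y) (d y z)))"

definition ann :: "('a::comm_ring_1 \<Rightarrow> 'm::ab_group_add \<Rightarrow> 'm) \<Rightarrow> 'm \<Rightarrow> 'a set" where
  "ann scale v = {a. scale a v = 0}"

definition metrizable :: "('a::comm_ring_1 \<Rightarrow> 'm::ab_group_add \<Rightarrow> 'm) \<Rightarrow> 'm set \<Rightarrow> bool" where
  "metrizable scale S \<longleftrightarrow>
     (\<forall>x\<in>S. \<forall>y\<in>S. \<exists>c. ann scale (x - y) = {c * r | r. True})"

definition modular_metric :: "('a::comm_ring_1 \<Rightarrow> 'm::ab_group_add \<Rightarrow> 'm) \<Rightarrow> 'm \<Rightarrow> 'm \<Rightarrow> 'a" where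
  "modular_metric scale x y =
     1 - (THE a. a * a = a \<and> ann scale (x - y) = {a * r | r. True})"

definition modular_isometry ::
  "'x set \<Rightarrow> ('x \<Rightarrow> 'x \<Rightarrow> 'a::comm_ring_1) \<Rightarrow> ('a \<Rightarrow> 'm::ab_group_add \<Rightarrow> 'm) \<Rightarrow> 'm set \<Rightarrow> ('x \<Rightarrow> 'm) \<Rightarrow> bool" where
  "modular_isometry X d scale S g \<longleftrightarrow>
     bij_betw g X S \<and> (\<forall>x\<in>X. \<forall>y\<in>X. modular_metric scale (g x) (g y) = d x y)"

end

theory Submission
  imports Defs
begin

(* Proof idea (a Kuratowski-type embedding).  View the functions X -> B as a B-module under
   pointwise scaling and send x to its distance function k(x) = d(x,-).
   The triangle inequality in a Boolean ring yields |d(x,z) - d(y,z)| <= d(x,y),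
   i.e. d(x,y) * (d(x,z) - d(y,z)) = d(x,z) - d(y,z); evaluating at z = y shows
   d(x,y) itself occurs as a coordinate of k(x) - k(y).  Hence
   Ann(k(x) - k(y)) = {a. a * d(x,y) = 0}, the principal ideal generated by the
   idempotent 1 - d(x,y), so the modular metric between k(x) and k(y) is d(x,y).
   Translating the embedding by any fixed function c changes no difference, so
   g(x) = k(x) - c is an isometry onto a metrizable subset for every c; the choice
   c = k(x0) gives g(x0) = 0.  The file first collects Boolean-ring arithmetic,
   then the facts on principal idempotent ideals, then the embedding. *)

lemma boolean_ring_idem:
  assumes "boolean_ring TYPE('b::comm_ring_1)"
  shows "(a::'b) * a = a"
  using assms unfolding boolean_ring_def by blast

text \<open>A Boolean ring has characteristic 2: expand \<open>(a + a)\<^sup>2 = a + a\<close>.\<close>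
lemma boolean_ring_double:
  assumes B: "boolean_ring TYPE('b::comm_ring_1)"
  shows "(a::'b) + a = 0"
proof -
  have "a + a + (a + a) = a * a + a * a + (a * a + a * a)"
    by (simp only: boolean_ring_idem[OF B])
  also have "\<dots> = (a + a) * (a + a)" by (simp only: distrib_left distrib_right add.assoc)
  also have "\<dots> = 0 + (a + a)" by (simp only: boolean_ring_idem[OF B] add_0_left)
  finally show ?thesis by (rule add_right_imp_eq)
qed

lemma boolean_ring_diff:
  assumes B: "boolean_ring TYPE('b::comm_ring_1)"
  shows "(a::'b) - b = a + b"
proof -
  have "- b = b" using boolean_ring_double[OF B, of b] by (simp add: add_eq_0_iff)
  thus ?thesis by (metis diff_conv_add_uminus)
qed

text \<open>The Boolean analogue of the reverse triangle inequality:
  if \<open>p \<le> u \<or> q\<close> and \<open>q \<le> u \<or> p\<close>, then \<open>p - q \<le> u\<close>.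
  Applied to distances it gives \<open>|d(x,z) - d(y,z)| \<le> d(x,y)\<close>.\<close>
lemma boolean_ring_diff_le:
  fixes p q u :: "'b::comm_ring_1"
  assumes B: "boolean_ring TYPE('b)"
    and pq: "ble p (bjoin u q)" and qp: "ble q (bjoin u p)"
  shows "u * (p - q) = p - q"
proof -
  have dbl: "\<And>a::'b. a + a = 0" by (rule boolean_ring_double[OF B])
  have e1: "p*u + p*q + u*(p*q) = p" using pq unfolding ble_def bjoin_def
    by (simp add: algebra_simps)
  have e2: "q*u + p*q + u*(p*q) = q" using qp unfolding ble_def bjoin_def
    by (simp add: algebra_simps)
  have "(p*u + q*u) + (p*q + p*q) + (u*(p*q) + u*(p*q))
        = (p*u + p*q + u*(p*q)) + (q*u + p*q + u*(p*q))"
    by (simp only: ac_simps)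
  also have "\<dots> = p + q" using e1 e2 by simp
  finally have "p*u + q*u = p + q" by (simp add: dbl)
  thus ?thesis by (simp add: boolean_ring_diff[OF B] algebra_simps)
qed

lemma the_idempotent_generator:
  fixes e :: "'a::comm_ring_1"
  assumes idem: "e * e = e" and A: "A = {e * r | r. True}"
  shows "(THE a. a * a = a \<and> A = {a * r | r. True}) = e"
proof (rule the_equality)
  show "e * e = e \<and> A = {e * r | r. True}" using idem A by simp
  fix a assume a: "a * a = a \<and> A = {a * r | r. True}"
  have "a \<in> A" using a by (auto intro: exI[of _ 1])
  then obtain r where r: "a = e * r" using A by auto
  have "e \<in> A" using A by (auto intro: exI[of _ 1])
  then obtain s where s: "e = a * s" using a by auto
  have "e * a = a" using r idem by (metis mult.assoc)
  moreover have "a * e = e" using s a by (metis mult.assoc)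
  ultimately show "a = e" by (simp add: mult.commute)
qed

lemma annihilator_of_idempotent:
  fixes u :: "'a::comm_ring_1"
  assumes idem: "u * u = u"
  shows "{a. a * u = 0} = {(1 - u) * r | r. True}"
proof (intro set_eqI iffI)
  fix a assume "a \<in> {a. a * u = 0}"
  hence "a = (1 - u) * a" by (simp add: algebra_simps)
  thus "a \<in> {(1 - u) * r | r. True}" by blast
next
  fix a assume "a \<in> {(1 - u) * r | r. True}"
  then obtain r where r: "a = (1 - u) * r" by blast
  have "a * u = (1 - u) * r * u" by (subst r) (rule refl)
  also have "\<dots> = r * u - r * (u * u)" by (simp add: algebra_simps)
  also have "\<dots> = 0" using idem by simp
  finally show "a \<in> {a. a * u = 0}" by simp
qed

definition pointwise_scale :: "'b::comm_ring_1 \<Rightarrow> ('x \<Rightarrow> 'b) \<Rightarrow> ('x \<Rightarrow> 'b)" where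
  "pointwise_scale a f = (\<lambda>z. a * f z)"

lemma module_pointwise_scale:
  "module (pointwise_scale :: 'b::comm_ring_1 \<Rightarrow> ('x \<Rightarrow> 'b) \<Rightarrow> ('x \<Rightarrow> 'b))"
  by unfold_locales (auto simp: pointwise_scale_def algebra_simps)

lemma ann_pointwise_scale_zero: "ann pointwise_scale (0 :: 'x \<Rightarrow> 'b::comm_ring_1) = UNIV"
  by (simp add: ann_def pointwise_scale_def fun_eq_iff)

definition dist_fun :: "'x set \<Rightarrow> ('x \<Rightarrow> 'x \<Rightarrow> 'b::comm_ring_1) \<Rightarrow> 'x \<Rightarrow> 'x \<Rightarrow> 'b" where
  "dist_fun X d x = (\<lambda>z. if z \<in> X then d x z else 0)"

text \<open>The annihilator of the difference of two distance functions consists exactly of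
  the scalars killing \<open>d(x,y)\<close>: the coordinate at \<open>y\<close> is \<open>d(x,y)\<close>, and every other
  coordinate is a multiple of it by \<open>boolean_ring_diff_le\<close>.\<close>
lemma ann_dist_fun_diff:
  fixes d :: "'x \<Rightarrow> 'x \<Rightarrow> 'b::comm_ring_1"
  assumes B: "boolean_ring TYPE('b)" and M: "boolean_metric X d"
    and x: "x \<in> X" and y: "y \<in> X"
  shows "ann pointwise_scale (dist_fun X d x - dist_fun X d y) = {a. a * d x y = 0}"
proof -
  have d0: "\<And>x y. x \<in> X \<Longrightarrow> y \<in> X \<Longrightarrow> d x y = 0 \<longleftrightarrow> x = y"
   and sym: "\<And>x y. x \<in> X \<Longrightarrow> y \<in> X \<Longrightarrow> d x y = d y x"
   and tri: "\<And>x y z. x \<in> X \<Longrightarrow> y \<in> X \<Longrightarrow> z \<in> X \<Longrightarrow> ble (d x z) (bjoin (d x y) (d y z))"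
    using M unfolding boolean_metric_def by blast+
  have bound: "d x y * (d x z - d y z) = d x z - d y z" if z: "z \<in> X" for z
  proof (rule boolean_ring_diff_le[OF B tri[OF x y z]])
    show "ble (d y z) (bjoin (d x y) (d x z))" using tri[OF y x z] sym[OF x y] by simp
  qed
  have "pointwise_scale a (dist_fun X d x - dist_fun X d y) = 0 \<longleftrightarrow> a * d x y = 0" for a
  proof
    assume "pointwise_scale a (dist_fun X d x - dist_fun X d y) = 0"
    from fun_cong[OF this, of y] show "a * d x y = 0"
      using y d0[OF y y] by (simp add: pointwise_scale_def dist_fun_def)
  next
    assume a: "a * d x y = 0"
    have "a * (d x z - d y z) = 0" if "z \<in> X" for z
      using a bound[OF that] by (metis mult.assoc mult_zero_left)
    thus "pointwise_scale a (dist_fun X d x - dist_fun X d y) = 0"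
      by (simp add: pointwise_scale_def dist_fun_def fun_eq_iff)
  qed
  thus ?thesis by (simp add: ann_def)
qed

text \<open>Every translate of the embedding is an isometry onto a metrizable subset of the
  module; translation leaves all differences, hence all annihilators, unchanged.\<close>
lemma translated_dist_fun_isometry:
  fixes d :: "'x \<Rightarrow> 'x \<Rightarrow> 'b::comm_ring_1" and c :: "'x \<Rightarrow> 'b"
  assumes B: "boolean_ring TYPE('b)" and M: "boolean_metric X d"
  defines "g \<equiv> \<lambda>x. dist_fun X d x - c"
  shows "metrizable pointwise_scale (g ` X) \<and> modular_isometry X d pointwise_scale (g ` X) g"
proof -
  have ann_g: "ann pointwise_scale (g x - g y) = {(1 - d x y) * r | r. True}"
    if "x \<in> X" "y \<in> X" for x y
    using ann_dist_fun_diff[OF B M that]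
      annihilator_of_idempotent[OF boolean_ring_idem[OF B]] by (simp add: g_def)
  have dist: "modular_metric pointwise_scale (g x) (g y) = d x y" if "x \<in> X" "y \<in> X" for x y
    using the_idempotent_generator[OF boolean_ring_idem[OF B] ann_g[OF that]]
    by (simp add: modular_metric_def)
  have "inj_on g X"
  proof (rule inj_onI)
    fix x y assume xy: "x \<in> X" "y \<in> X" and "g x = g y"
    hence "{a. a * d x y = 0} = ann pointwise_scale (0 :: 'x \<Rightarrow> 'b)"
      using ann_dist_fun_diff[OF B M xy] by (simp add: g_def)
    hence "1 * d x y = 0" using ann_pointwise_scale_zero by blast
    hence "d x y = 0" by simp
    thus "x = y" using M xy unfolding boolean_metric_def by blast
  qed
  moreover have "metrizable pointwise_scale (g ` X)"
    unfolding metrizable_def using ann_g by blast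
  ultimately show ?thesis
    using dist by (simp add: modular_isometry_def bij_betw_def)
qed

theorem mainTheorem13:
  fixes X :: "'x set" and d :: "'x \<Rightarrow> 'x \<Rightarrow> 'b::comm_ring_1"
  assumes "boolean_ring TYPE('b)"
    and "boolean_metric X d"
  shows "(\<exists>(scale :: 'b \<Rightarrow> ('x \<Rightarrow> 'b) \<Rightarrow> ('x \<Rightarrow> 'b)) S g.
            module scale \<and> metrizable scale S \<and> modular_isometry X d scale S g)
       \<and> (\<forall>x0\<in>X. \<exists>(scale :: 'b \<Rightarrow> ('x \<Rightarrow> 'b) \<Rightarrow> ('x \<Rightarrow> 'b)) S g.
            module scale \<and> metrizable scale S \<and> 0 \<in> S \<and>
            modular_isometry X d scale S g \<and> g x0 = 0)"
proof (intro conjI ballI)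
  note embedding = translated_dist_fun_isometry[OF assms]
  note module = module_pointwise_scale
  show "\<exists>(scale :: 'b \<Rightarrow> ('x \<Rightarrow> 'b) \<Rightarrow> ('x \<Rightarrow> 'b)) S g.
          module scale \<and> metrizable scale S \<and> modular_isometry X d scale S g"
    using embedding[of 0] module by blast
  fix x0 assume x0: "x0 \<in> X"
  let ?g = "\<lambda>x. dist_fun X d x - dist_fun X d x0"
  have "?g x0 = 0" and "0 \<in> ?g ` X" using x0 by force+
  thus "\<exists>(scale :: 'b \<Rightarrow> ('x \<Rightarrow> 'b) \<Rightarrow> ('x \<Rightarrow> 'b)) S g.
          module scale \<and> metrizable scale S \<and> 0 \<in> S \<and>
          modular_isometry X d scale S g \<and> g x0 = 0"
    using embedding[of "dist_fun X d x0"] module by blast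
qed

end
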